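(* Let $n\ge2$, let $G$ be an absolutely continuous distribution function on $[0,\infty)$, $\lambda>0$, $\alpha_1,\dots,\alpha_n,\alpha^*_1,\dots,\alpha^*_n>0$. Let $\phi_1,\phi_2$ be Archimedean generators with pseudo-inverses $\psi_1,\psi_2$. Let $\boldsymbol{X}=(X_1,\dots,X_n)$ have joint distribution function $\phi_1\big(\sum_{i=1}^n\psi_1([G(\lambda x_i)]^{\alpha_i})\big)$ and $\boldsymbol{X}^*=(X^*_1,\dots,X^*_n)$ have joint distribution function $\phi_2\big(\sum_{i=1}^n\psi_2([G(\lambda x_i)]^{\alpha^*_i})\big)$ (i.e. marginals $[G(\lambda x)]^{\alpha_i}$, resp. $[G(\lambda x)]^{\alpha^*_i}$, and Archimedean copulas with generators $\phi_1$, resp. $\phi_2$). (i) If $\phi_1$ or $\phi_2$ is log-convex, $\psi_2\circ\phi_1$ is super-additive, and $\sum_{i=j}^{n}\alpha^*_{(i)}\le\sum_{i=j}^{n}\alpha_{(i)}$ for all $j=1,\dots,n$, then $X_{n:n}\ge_{\rm st}X^*_{n:n}$. (ii) If $\phi_1$ or $\phi_2$ is log-concave, $\psi_1\circ\phi_2$ is super-additive, and $\sum_{i=1}^{j}\alpha^*_{(i)}\ge\sum_{i=1}^{j}\alpha_{(i)}$ for all $j=1,\dots,n$, then $X_{n:n}\le_{\rm st}X^*_{n:n}$.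
   Context: An Archimedean generator is an $n$-monotone function $\phi:[0,\infty)\to[0,1]$ with $\phi(0)=1$ and $\lim_{x\to\infty}\phi(x)=0$; $n$-monotone on $(a,b)$ means $(-1)^k\phi^{(k)}\ge0$ for $k=0,\dots,n-2$ and $(-1)^{n-2}\phi^{(n-2)}$ is decreasing and convex. $\psi=\phi^{-1}$ is its pseudo-inverse. A function $h$ is super-additive if $h(x+y)\ge h(x)+h(y)$ for all $x,y\ge0$. $X_{n:n}=\max_i X_i$. For a vector $\boldsymbol{x}$, $x_{(1)}\le\dots\le x_{(n)}$ are its components in increasing order. $X\le_{\rm st}Y$ means $P(X>x)\le P(Y>x)$ for all $x$. *)

theory Defs
  imports "HOL-Probability.Probability"
begin

definition n_monotone_on :: "nat \<Rightarrow> real set \<Rightarrow> (real \<Rightarrow> real) \<Rightarrow> bool" where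
  "n_monotone_on n S f \<longleftrightarrow>
     (\<forall>k. k + 2 < n \<longrightarrow> (\<forall>x\<in>S. ((deriv ^^ k) f) differentiable (at x))) \<and>
     (\<forall>k. k + 2 \<le> n \<longrightarrow> (\<forall>x\<in>S. (-1) ^ k * (deriv ^^ k) f x \<ge> 0)) \<and>
     antimono_on S (\<lambda>x. (-1) ^ (n - 2) * (deriv ^^ (n - 2)) f x) \<and>
     convex_on S (\<lambda>x. (-1) ^ (n - 2) * (deriv ^^ (n - 2)) f x)"

definition archimedean_generator :: "nat \<Rightarrow> (real \<Rightarrow> real) \<Rightarrow> bool" where
  "archimedean_generator n \<phi> \<longleftrightarrow>
     (\<forall>x\<ge>0. 0 \<le> \<phi> x \<and> \<phi> x \<le> 1) \<and> \<phi> 0 = 1 \<and>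
     continuous_on {0..} \<phi> \<and>
     (\<phi> \<longlongrightarrow> 0) at_top \<and>
     n_monotone_on n {0<..} \<phi>"

text \<open>Pseudo-inverse psi = phi^{-1}, with values in [0,oo]: psi(y) = inf {u \<ge> 0. phi u \<le> y};
  psi(0) = oo when phi is strict (never reaches 0).\<close>
definition pinv :: "(real \<Rightarrow> real) \<Rightarrow> real \<Rightarrow> ereal" where
  "pinv \<phi> y = Inf {ereal u | u. 0 \<le> u \<and> \<phi> u \<le> y}"

definition gen_ext :: "(real \<Rightarrow> real) \<Rightarrow> ereal \<Rightarrow> real" where
  "gen_ext \<phi> z = (if z = \<infinity> then 0 else \<phi> (real_of_ereal z))"

definition arch_copula :: "(real \<Rightarrow> real) \<Rightarrow> nat \<Rightarrow> (nat \<Rightarrow> real) \<Rightarrow> real" where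
  "arch_copula \<phi> n u = gen_ext \<phi> (\<Sum>i<n. pinv \<phi> (u i))"

definition super_additive :: "(real \<Rightarrow> ereal) \<Rightarrow> bool" where
  "super_additive h \<longleftrightarrow> (\<forall>x\<ge>0. \<forall>y\<ge>0. h (x + y) \<ge> h x + h y)"

text \<open>Log-convexity / log-concavity on S, for nonnegative f (zeros allowed, log 0 = -oo).\<close>
definition log_convex_on :: "real set \<Rightarrow> (real \<Rightarrow> real) \<Rightarrow> bool" where
  "log_convex_on S f \<longleftrightarrow> (\<forall>x\<in>S. 0 \<le> f x) \<and>
     (\<forall>x\<in>S. \<forall>y\<in>S. \<forall>t\<in>{0<..<1}. f ((1 - t) * x + t * y) \<le> f x powr (1 - t) * f y powr t)"

definition log_concave_on :: "real set \<Rightarrow> (real \<Rightarrow> real) \<Rightarrow> bool" where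
  "log_concave_on S f \<longleftrightarrow> (\<forall>x\<in>S. 0 \<le> f x) \<and>
     (\<forall>x\<in>S. \<forall>y\<in>S. \<forall>t\<in>{0<..<1}. f ((1 - t) * x + t * y) \<ge> f x powr (1 - t) * f y powr t)"

text \<open>Increasing rearrangement: x_(i) for i = 0..n-1 (i.e. x_(i+1) in 1-based notation).\<close>
definition ord_stat :: "nat \<Rightarrow> (nat \<Rightarrow> real) \<Rightarrow> nat \<Rightarrow> real" where
  "ord_stat n x i = sort (map x [0..<n]) ! i"

definition joint_cdf :: "'a measure \<Rightarrow> nat \<Rightarrow> ('a \<Rightarrow> nat \<Rightarrow> real) \<Rightarrow> (nat \<Rightarrow> real) \<Rightarrow> real" where
  "joint_cdf M n X x = measure M {\<omega> \<in> space M. \<forall>i<n. X \<omega> i \<le> x i}"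

definition max_stat :: "nat \<Rightarrow> (nat \<Rightarrow> real) \<Rightarrow> real" where
  "max_stat n x = Max (x ` {..<n})"

definition st_le :: "'a measure \<Rightarrow> ('a \<Rightarrow> real) \<Rightarrow> 'b measure \<Rightarrow> ('b \<Rightarrow> real) \<Rightarrow> bool" where
  "st_le M X N Y \<longleftrightarrow> (\<forall>x. measure M {\<omega> \<in> space M. X \<omega> > x} \<le> measure N {\<omega> \<in> space N. Y \<omega> > x})"

end

theory Submission
  imports Defs
begin

text \<open>On the diagonal the distribution function of the maximum is the copula value
  P(X_{n:n} \<le> x) = \<phi>(\<Sum>\<psi>(v^\<alpha>_i)) with v = G(\<lambda>x), so it suffices to compare these numbers.
  Two moves achieve this. Changing the generator at fixed arguments u_i: with r_i = \<psi>1(u_i),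
  super-additivity of \<psi>2 \<circ> \<phi>1 gives \<Sum>\<psi>2(u_i) \<le> \<psi>2(\<phi>1(\<Sum>r_i)), hence C1(u) \<le> C2(u).
  Changing the exponents at a fixed generator: log-convexity (log-concavity) of \<phi> makes
  a \<mapsto> \<psi>(v^a) increasing and convex (concave), and the weak majorization hypotheses on the
  ordered exponents then compare \<Sum>\<psi>(v^\<alpha>_i) with \<Sum>\<psi>(v^\<alpha>*_i) by supporting lines and Abel
  summation. Whichever generator is log-convex (log-concave) decides the order of the two moves.\<close>

lemma sum_mult_nonneg_if_tail_sums_nonneg:
  fixes c d :: "nat \<Rightarrow> real"
  assumes "\<And>i. i < n \<Longrightarrow> 0 \<le> c i" and "\<And>i j. i \<le> j \<Longrightarrow> j < n \<Longrightarrow> c i \<le> c j"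
    and "\<And>j. j < n \<Longrightarrow> 0 \<le> (\<Sum>i=j..<n. d i)"
  shows "0 \<le> (\<Sum>i<n. c i * d i)"
  using assms
proof (induction n arbitrary: c d)
  case 0
  then show ?case by simp
next
  case (Suc n)
  \<comment> \<open>Abel summation: peel off c 0 times the full sum and recurse on the increments.\<close>
  have "0 \<le> (\<Sum>i<n. (c (Suc i) - c 0) * d (Suc i))"
  proof (rule Suc.IH)
    fix j assume "j < n"
    have "(\<Sum>i=j..<n. d (Suc i)) = (\<Sum>i=Suc j..<Suc n. d i)"
      by (rule sum.shift_bounds_Suc_ivl[symmetric])
    then show "0 \<le> (\<Sum>i=j..<n. d (Suc i))" using Suc.prems(3) \<open>j < n\<close> by simp
  qed (use Suc.prems(2) in auto)
  moreover have "0 \<le> c 0 * (\<Sum>i=0..<Suc n. d i)" using Suc.prems(1,3) by simp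
  moreover have "(\<Sum>i<Suc n. c i * d i)
      = c 0 * (\<Sum>i=0..<Suc n. d i) + (\<Sum>i<n. (c (Suc i) - c 0) * d (Suc i))"
    by (simp only: atLeast0LessThan sum.lessThan_Suc_shift)
      (simp add: algebra_simps sum_distrib_left sum_subtractf)
  ultimately show ?case by linarith
qed

lemma sum_mult_nonpos_if_prefix_sums_nonpos:
  fixes c d :: "nat \<Rightarrow> real"
  assumes "\<And>i. i < n \<Longrightarrow> 0 \<le> c i" and "\<And>i j. i \<le> j \<Longrightarrow> j < n \<Longrightarrow> c j \<le> c i"
    and "\<And>j. j < n \<Longrightarrow> (\<Sum>i<Suc j. d i) \<le> 0"
  shows "(\<Sum>i<n. c i * d i) \<le> 0"
  using assms
proof (induction n arbitrary: c)
  case 0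
  then show ?case by simp
next
  case (Suc n)
  have "(\<Sum>i<n. (c i - c n) * d i) \<le> 0"
    by (rule Suc.IH) (use Suc.prems in auto)
  moreover have "c n * (\<Sum>i<Suc n. d i) \<le> 0"
    using Suc.prems(1,3) by (simp add: mult_nonneg_nonpos)
  moreover have "(\<Sum>i<Suc n. c i * d i) = c n * (\<Sum>i<Suc n. d i) + (\<Sum>i<n. (c i - c n) * d i)"
    by (simp add: algebra_simps sum_distrib_left sum_subtractf)
  ultimately show ?case by linarith
qed

lemma sum_convex_le_if_tail_sums_le:
  fixes f :: "real \<Rightarrow> real" and a b :: "nat \<Rightarrow> real"
  assumes cvx: "convex_on {0<..} f" and mono: "mono_on {0<..} f"
    and a: "\<And>i. i < n \<Longrightarrow> 0 < a i" and b: "\<And>i. i < n \<Longrightarrow> 0 < b i"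
    and b_sorted: "\<And>i j. i \<le> j \<Longrightarrow> j < n \<Longrightarrow> b i \<le> b j"
    and tail: "\<And>j. j < n \<Longrightarrow> (\<Sum>i=j..<n. b i) \<le> (\<Sum>i=j..<n. a i)"
  shows "(\<Sum>i<n. f (b i)) \<le> (\<Sum>i<n. f (a i))"
proof -
  \<comment> \<open>Supporting slopes c_i at the sorted b_i are nonnegative and nondecreasing, so
    \<Sum>f(a_i) - f(b_i) \<ge> \<Sum>c_i(a_i - b_i) \<ge> 0 by Abel summation against the tail sums.\<close>
  define c where "c i = Inf ((\<lambda>t. (f (b i) - f t) / (b i - t)) ` ({b i<..} \<inter> {0<..}))" for i
  have supp: "f (b i) + c i * (y - b i) \<le> f y" if "i < n" "0 < y" for i y
    unfolding c_def by (rule convex_le_Inf_differential[OF cvx]) (use that b in \<open>auto simp: interior_open\<close>)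
  have c_nonneg: "0 \<le> c i" if i: "i < n" for i
  proof -
    have "f (b i / 2) \<le> f (b i)" using mono b[OF i] by (auto intro: mono_onD)
    then have "0 \<le> c i * (b i / 2)" using supp[OF i, of "b i / 2"] b[OF i] by (simp add: algebra_simps)
    then show ?thesis using b[OF i] by (simp add: zero_le_mult_iff)
  qed
  have c_mono: "c i \<le> c j" if ij: "i \<le> j" "j < n" for i j
  proof -
    have "0 \<le> (c j - c i) * (b j - b i)"
      using supp[of i "b j"] supp[of j "b i"] ij b by (simp add: algebra_simps)
    then show ?thesis using b_sorted[OF ij] by (cases "b i = b j") (auto simp: c_def zero_le_mult_iff)
  qed
  have "0 \<le> (\<Sum>i<n. c i * (a i - b i))"
    by (rule sum_mult_nonneg_if_tail_sums_nonneg[OF c_nonneg c_mono]) (use tail in \<open>simp_all add: sum_subtractf\<close>)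
  also have "\<dots> \<le> (\<Sum>i<n. f (a i) - f (b i))"
    by (rule sum_mono) (use supp a in \<open>fastforce simp: algebra_simps\<close>)
  finally show ?thesis by (simp add: sum_subtractf)
qed

lemma sum_concave_le_if_prefix_sums_ge:
  fixes f :: "real \<Rightarrow> real" and a b :: "nat \<Rightarrow> real"
  assumes ccv: "concave_on {0<..} f" and mono: "mono_on {0<..} f"
    and a: "\<And>i. i < n \<Longrightarrow> 0 < a i" and b: "\<And>i. i < n \<Longrightarrow> 0 < b i"
    and b_sorted: "\<And>i j. i \<le> j \<Longrightarrow> j < n \<Longrightarrow> b i \<le> b j"
    and prefix: "\<And>j. j < n \<Longrightarrow> (\<Sum>i<Suc j. a i) \<le> (\<Sum>i<Suc j. b i)"
  shows "(\<Sum>i<n. f (a i)) \<le> (\<Sum>i<n. f (b i))"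
proof -
  define c where "c i = - Inf ((\<lambda>t. (f t - f (b i)) / (b i - t)) ` ({b i<..} \<inter> {0<..}))" for i
  have supp: "f y \<le> f (b i) + c i * (y - b i)" if "i < n" "0 < y" for i y
    using convex_le_Inf_differential[of "{0<..}" "\<lambda>x. - f x" "b i" y] ccv that b
    by (simp add: c_def concave_on_def interior_open algebra_simps)
  have c_nonneg: "0 \<le> c i" if i: "i < n" for i
  proof -
    have "f (b i) \<le> f (b i + 1)" using mono b[OF i] by (auto intro: mono_onD)
    then show ?thesis using supp[OF i, of "b i + 1"] b[OF i] by simp
  qed
  have c_antimono: "c j \<le> c i" if ij: "i \<le> j" "j < n" for i j
  proof -
    have "0 \<le> (c i - c j) * (b j - b i)"
      using supp[of i "b j"] supp[of j "b i"] ij b by (simp add: algebra_simps)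
    then show ?thesis using b_sorted[OF ij] by (cases "b i = b j") (auto simp: c_def zero_le_mult_iff)
  qed
  have "(\<Sum>i<n. f (a i) - f (b i)) \<le> (\<Sum>i<n. c i * (a i - b i))"
    by (rule sum_mono) (use supp a in \<open>fastforce simp: algebra_simps\<close>)
  also have "\<dots> \<le> 0"
    by (rule sum_mult_nonpos_if_prefix_sums_nonpos[OF c_nonneg c_antimono])
      (use prefix in \<open>simp_all add: sum_subtractf\<close>)
  finally show ?thesis by (simp add: sum_subtractf)
qed

lemma sum_ord_stat:
  fixes x :: "nat \<Rightarrow> real" and f :: "real \<Rightarrow> 'b::comm_monoid_add"
  shows "(\<Sum>i<n. f (ord_stat n x i)) = (\<Sum>i<n. f (x i))"
proof -
  have "(\<Sum>i<n. f (ord_stat n x i)) = sum_list (map f (sort (map x [0..<n])))"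
    by (simp add: ord_stat_def sum_list_sum_nth atLeast0LessThan)
  also have "\<dots> = sum_list (map f (map x [0..<n]))"
    by (metis mset_map mset_sort sum_mset_sum_list)
  also have "\<dots> = (\<Sum>i<n. f (x i))"
    by (simp add: sum_list_sum_nth atLeast0LessThan)
  finally show ?thesis .
qed

lemma ord_stat_mono: "i \<le> j \<Longrightarrow> j < n \<Longrightarrow> ord_stat n x i \<le> ord_stat n x j"
  unfolding ord_stat_def by (rule sorted_nth_mono) auto

lemma ord_stat_preserves:
  assumes "\<And>k. k < n \<Longrightarrow> P (x k)" and "i < n"
  shows "P (ord_stat n x i)"
proof -
  have "ord_stat n x i \<in> set (sort (map x [0..<n]))"
    unfolding ord_stat_def using assms(2) by (intro nth_mem) simp
  then show ?thesis using assms(1) by auto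
qed

lemma antimono_on_atLeast_if_greaterThan:
  fixes f :: "real \<Rightarrow> real"
  assumes anti: "antimono_on {a<..} f" and cont: "continuous_on {a..} f"
  shows "antimono_on {a..} f"
proof (rule monotone_onI)
  fix x y assume xy: "x \<in> {a..}" "y \<in> {a..}" "x \<le> y"
  show "f y \<le> f x"
  proof (cases "a < x \<or> x = y")
    case True
    then show ?thesis using monotone_onD[OF anti, of x y] xy by auto
  next
    case False
    then have x: "x = a" and y: "a < y" using xy by auto
    have "(f \<longlongrightarrow> f a) (at_right a)"
      using cont by (auto simp: continuous_on_def intro: tendsto_within_subset)
    moreover have "\<forall>\<^sub>F t in at_right a. f y \<le> f t"
      using y by (auto simp: eventually_at_right_field intro!: exI[of _ y] monotone_onD[OF anti])
    ultimately show ?thesis using x by (auto intro: tendsto_lowerbound)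
  qed
qed

lemma archimedean_generatorD:
  assumes "archimedean_generator n \<phi>"
  shows "\<And>x. 0 \<le> x \<Longrightarrow> 0 \<le> \<phi> x" "\<And>x. 0 \<le> x \<Longrightarrow> \<phi> x \<le> 1" "\<phi> 0 = 1"
    "continuous_on {0..} \<phi>" "(\<phi> \<longlongrightarrow> 0) at_top" "n_monotone_on n {0<..} \<phi>"
  using assms unfolding archimedean_generator_def by auto

text \<open>For n \<le> 2 antitonicity is part of n-monotonicity; otherwise \<phi>' \<le> 0.\<close>
lemma archimedean_generator_antimono:
  assumes gen: "archimedean_generator n \<phi>"
  shows "antimono_on {0..} \<phi>"
proof (rule antimono_on_atLeast_if_greaterThan[OF _ archimedean_generatorD(4)[OF gen]])
  have nmon: "n_monotone_on n {0<..} \<phi>" by (rule archimedean_generatorD(6)[OF gen])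
  show "antimono_on {0<..} \<phi>"
  proof (cases "n \<le> 2")
    case True
    then show ?thesis using nmon by (simp add: n_monotone_on_def)
  next
    case False
    have diff: "\<phi> differentiable (at x)" if "0 < x" for x
      using nmon False that unfolding n_monotone_on_def by (auto dest!: spec[of _ 0])
    have deriv_nonpos: "deriv \<phi> x \<le> 0" if "0 < x" for x
      using nmon False that unfolding n_monotone_on_def by (auto dest!: spec[of _ 1])
    show ?thesis
    proof (rule monotone_onI)
      fix x y :: real assume xy: "x \<in> {0<..}" "y \<in> {0<..}" "x \<le> y"
      show "\<phi> y \<le> \<phi> x"
      proof (rule DERIV_nonpos_imp_decreasing_open[OF xy(3)])
        show "continuous_on {x..y} \<phi>"
          using archimedean_generatorD(4)[OF gen] xy by (auto intro: continuous_on_subset)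
      qed (use xy diff deriv_nonpos DERIV_deriv_iff_real_differentiable in force)
    qed
  qed
qed

lemma archimedean_generator_le:
  "archimedean_generator n \<phi> \<Longrightarrow> 0 \<le> x \<Longrightarrow> x \<le> y \<Longrightarrow> \<phi> y \<le> \<phi> x"
  using monotone_onD[OF archimedean_generator_antimono] by auto

lemma pinv_nonneg: "0 \<le> pinv \<phi> y"
  unfolding pinv_def by (rule Inf_greatest) auto

lemma pinv_le: "0 \<le> u \<Longrightarrow> \<phi> u \<le> y \<Longrightarrow> pinv \<phi> y \<le> ereal u"
  unfolding pinv_def by (rule Inf_lower) auto

lemma pinv_antimono: "y \<le> y' \<Longrightarrow> pinv \<phi> y' \<le> pinv \<phi> y"
  unfolding pinv_def by (rule Inf_superset_mono) auto

lemma pinv_eq_infinity: "\<not> (\<exists>u\<ge>0. \<phi> u \<le> y) \<Longrightarrow> pinv \<phi> y = \<infinity>"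
  unfolding pinv_def by (auto simp: top_ereal_def[symmetric])

lemma pinv_attained:
  assumes gen: "archimedean_generator n \<phi>" and y: "y \<le> 1" and ex: "\<exists>u\<ge>0. \<phi> u \<le> y"
  shows "\<exists>r\<ge>0. pinv \<phi> y = ereal r \<and> \<phi> r = y"
proof -
  define S where "S = {u. 0 \<le> u \<and> \<phi> u \<le> y}"
  have ne: "S \<noteq> {}" and bdd: "bdd_below S" using ex by (auto simp: S_def intro: bdd_belowI[of _ 0])
  have "closed ({0..} \<inter> \<phi> -` {..y})"
    by (rule continuous_closed_preimage[OF archimedean_generatorD(4)[OF gen]]) auto
  moreover have "{0..} \<inter> \<phi> -` {..y} = S" by (auto simp: S_def)
  ultimately have r: "Inf S \<in> S" using closed_contains_Inf[OF ne bdd] by simp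
  have "pinv \<phi> y = ereal (Inf S)"
    using ereal_Inf'[OF bdd ne] by (simp add: pinv_def S_def setcompr_eq_image)
  moreover have "\<phi> (Inf S) = y"
  proof -
    \<comment> \<open>By continuity \<phi> takes the value y between 0 and Inf S; minimality excludes points below Inf S.\<close>
    have "continuous_on {0..Inf S} \<phi>"
      by (rule continuous_on_subset[OF archimedean_generatorD(4)[OF gen]]) auto
    then obtain u where u: "0 \<le> u" "u \<le> Inf S" "\<phi> u = y"
      using IVT2'[of \<phi> "Inf S" y 0] r y archimedean_generatorD(3)[OF gen] by (auto simp: S_def)
    then have "Inf S \<le> u" by (intro cInf_lower[OF _ bdd]) (simp add: S_def)
    then show ?thesis using u by simp
  qed
  ultimately show ?thesis using r by (auto simp: S_def)
qed

lemma pinv_attained_pos: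
  assumes gen: "archimedean_generator n \<phi>" and y: "0 < y" "y \<le> 1"
  shows "\<exists>r\<ge>0. pinv \<phi> y = ereal r \<and> \<phi> r = y"
proof (rule pinv_attained[OF gen y(2)])
  have "\<forall>\<^sub>F u in at_top. \<phi> u < y \<and> 0 \<le> u"
    using order_tendstoD(2)[OF archimedean_generatorD(5)[OF gen] y(1)] eventually_ge_at_top
    by (rule eventually_conj)
  then show "\<exists>u\<ge>0. \<phi> u \<le> y"
    by (metis (no_types, lifting) eventually_at_top_linorder less_eq_real_def order_refl)
qed

lemma pinv_one:
  assumes gen: "archimedean_generator n \<phi>"
  shows "pinv \<phi> 1 = 0"
proof -
  have "pinv \<phi> 1 \<le> ereal 0" by (rule pinv_le) (simp_all add: archimedean_generatorD(3)[OF gen])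
  then show ?thesis using pinv_nonneg[of \<phi> 1] by (simp add: zero_ereal_def)
qed

lemma gen_ext_nonneg: "archimedean_generator n \<phi> \<Longrightarrow> 0 \<le> z \<Longrightarrow> 0 \<le> gen_ext \<phi> z"
  using archimedean_generatorD(1) by (simp add: gen_ext_def real_of_ereal_pos)

lemma gen_ext_antimono:
  assumes gen: "archimedean_generator n \<phi>" and z: "0 \<le> z" "z \<le> z'"
  shows "gen_ext \<phi> z' \<le> gen_ext \<phi> z"
proof (cases "z' = \<infinity>")
  case True
  then show ?thesis using gen_ext_nonneg[OF gen z(1)] by (simp add: gen_ext_def)
next
  case False
  then obtain a b where "z = ereal a" "z' = ereal b" "0 \<le> a" "a \<le> b"
    using z by (cases z; cases z') auto
  then show ?thesis using archimedean_generator_le[OF gen] by (simp add: gen_ext_def)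
qed

lemma gen_ext_pinv:
  assumes gen: "archimedean_generator n \<phi>" and z: "0 \<le> z" "z \<le> 1"
  shows "gen_ext \<phi> (pinv \<phi> z) = z"
proof (cases "\<exists>u\<ge>0. \<phi> u \<le> z")
  case True
  then show ?thesis using pinv_attained[OF gen z(2)] by (auto simp: gen_ext_def)
next
  case False
  then have "z = 0" using pinv_attained_pos[OF gen _ z(2)] z(1) by force
  then show ?thesis using pinv_eq_infinity[OF False] by (simp add: gen_ext_def)
qed

lemma arch_copula_nonneg: "archimedean_generator n \<phi> \<Longrightarrow> 0 \<le> arch_copula \<phi> m u"
  unfolding arch_copula_def by (rule gen_ext_nonneg) (auto intro: sum_nonneg pinv_nonneg)

lemma arch_copula_eq_zero:
  assumes gen: "archimedean_generator n \<phi>" and i: "i < m" and u: "u i = 0"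
  shows "arch_copula \<phi> m u = 0"
proof (cases "\<exists>t\<ge>0. \<phi> t \<le> 0")
  case True
  then obtain r where r: "0 \<le> r" "pinv \<phi> 0 = ereal r" "\<phi> r = 0"
    using pinv_attained[OF gen, of 0] by auto
  have "ereal r \<le> (\<Sum>j<m. pinv \<phi> (u j))"
    using sum_mono2[of "{..<m}" "{i}" "\<lambda>j. pinv \<phi> (u j)"] i u r(2) pinv_nonneg by auto
  then have "gen_ext \<phi> (\<Sum>j<m. pinv \<phi> (u j)) \<le> gen_ext \<phi> (ereal r)"
    using gen_ext_antimono[OF gen] r(1) by simp
  then show ?thesis
    using r(3) arch_copula_nonneg[OF gen, of m u] by (simp add: arch_copula_def gen_ext_def)
next
  case False
  then have "(\<Sum>j<m. pinv \<phi> (u j)) = \<infinity>"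
    using pinv_eq_infinity[OF False] i u by (auto simp: sum_Pinfty pinv_nonneg intro!: bexI[of _ i])
  then show ?thesis by (simp add: arch_copula_def gen_ext_def)
qed

lemma super_additive_sum_le:
  fixes h :: "real \<Rightarrow> ereal" and r :: "nat \<Rightarrow> real"
  assumes sa: "super_additive h" and h0: "0 \<le> h 0" and r: "\<And>i. i < m \<Longrightarrow> 0 \<le> r i"
  shows "(\<Sum>i<m. h (r i)) \<le> h (\<Sum>i<m. r i)"
  using r
proof (induction m)
  case 0
  then show ?case using h0 by simp
next
  case (Suc m)
  have "(\<Sum>i<Suc m. h (r i)) \<le> h (\<Sum>i<m. r i) + h (r m)"
    using Suc by (simp add: add_right_mono)
  also have "\<dots> \<le> h ((\<Sum>i<m. r i) + r m)"
  proof -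
    have "0 \<le> (\<Sum>i<m. r i)" "0 \<le> r m" using Suc.prems by (auto intro: sum_nonneg)
    then show ?thesis using sa unfolding super_additive_def by blast
  qed
  finally show ?case by simp
qed

lemma arch_copula_le_if_super_additive:
  assumes gen1: "archimedean_generator n1 \<phi>1" and gen2: "archimedean_generator n2 \<phi>2"
    and sa: "super_additive (pinv \<phi>2 \<circ> \<phi>1)" and u: "\<And>i. i < m \<Longrightarrow> 0 \<le> u i \<and> u i \<le> 1"
  shows "arch_copula \<phi>1 m u \<le> arch_copula \<phi>2 m u"
proof (cases "\<exists>i<m. u i = 0")
  case True
  then show ?thesis using arch_copula_eq_zero[OF gen1] arch_copula_nonneg[OF gen2] by fastforce
next
  case False
  then have "\<exists>r\<ge>0. pinv \<phi>1 (u i) = ereal r \<and> \<phi>1 r = u i" if "i < m" for i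
    using pinv_attained_pos[OF gen1] u that by (metis order_le_less)
  then obtain r where r: "\<And>i. i < m \<Longrightarrow> 0 \<le> r i \<and> pinv \<phi>1 (u i) = ereal (r i) \<and> \<phi>1 (r i) = u i"
    by metis
  define s where "s = (\<Sum>i<m. r i)"
  have s: "0 \<le> s" unfolding s_def using r by (auto intro: sum_nonneg)
  have "(\<Sum>i<m. pinv \<phi>1 (u i)) = (\<Sum>i<m. ereal (r i))"
    by (rule sum.cong) (use r in auto)
  then have "arch_copula \<phi>1 m u = \<phi>1 s"
    by (simp add: arch_copula_def gen_ext_def s_def)
  also have "\<dots> = gen_ext \<phi>2 (pinv \<phi>2 (\<phi>1 s))"
    using gen_ext_pinv[OF gen2] archimedean_generatorD(1,2)[OF gen1 s] by simp
  also have "\<dots> \<le> arch_copula \<phi>2 m u"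
  proof -
    have "(\<Sum>i<m. pinv \<phi>2 (u i)) = (\<Sum>i<m. (pinv \<phi>2 \<circ> \<phi>1) (r i))"
      by (rule sum.cong) (use r in auto)
    also have "\<dots> \<le> (pinv \<phi>2 \<circ> \<phi>1) s"
      unfolding s_def by (rule super_additive_sum_le[OF sa]) (use r in \<open>auto simp: pinv_nonneg\<close>)
    finally have "(\<Sum>i<m. pinv \<phi>2 (u i)) \<le> pinv \<phi>2 (\<phi>1 s)" by simp
    then show ?thesis
      unfolding arch_copula_def by (rule gen_ext_antimono[OF gen2, rotated]) (auto intro: sum_nonneg pinv_nonneg)
  qed
  finally show ?thesis .
qed

definition pinv_powr :: "(real \<Rightarrow> real) \<Rightarrow> real \<Rightarrow> real \<Rightarrow> real" where
  "pinv_powr \<phi> u a = real_of_ereal (pinv \<phi> (u powr a))"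

lemma pinv_powr:
  assumes gen: "archimedean_generator n \<phi>" and u: "0 < u" "u \<le> 1" and a: "0 < a"
  shows "0 \<le> pinv_powr \<phi> u a" "pinv \<phi> (u powr a) = ereal (pinv_powr \<phi> u a)"
    "\<phi> (pinv_powr \<phi> u a) = u powr a"
proof -
  have "0 < u powr a" "u powr a \<le> 1" using u a by (auto intro: powr_le1)
  then obtain r where "0 \<le> r" "pinv \<phi> (u powr a) = ereal r" "\<phi> r = u powr a"
    using pinv_attained_pos[OF gen] by blast
  then show "0 \<le> pinv_powr \<phi> u a" "pinv \<phi> (u powr a) = ereal (pinv_powr \<phi> u a)"
    "\<phi> (pinv_powr \<phi> u a) = u powr a" by (auto simp: pinv_powr_def)
qed

lemma pinv_powr_mono:
  assumes gen: "archimedean_generator n \<phi>" and u: "0 < u" "u \<le> 1"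
  shows "mono_on {0<..} (pinv_powr \<phi> u)"
proof (rule monotone_onI)
  fix x y :: real assume xy: "x \<in> {0<..}" "y \<in> {0<..}" "x \<le> y"
  have "pinv \<phi> (u powr x) \<le> pinv \<phi> (u powr y)"
    using powr_mono'[OF xy(3)] u by (intro pinv_antimono) simp
  then show "pinv_powr \<phi> u x \<le> pinv_powr \<phi> u y"
    using pinv_powr(2)[OF gen u] xy by simp
qed

lemma pinv_powr_convex:
  assumes gen: "archimedean_generator n \<phi>" and lcvx: "log_convex_on {0..} \<phi>"
    and u: "0 < u" "u \<le> 1"
  shows "convex_on {0<..} (pinv_powr \<phi> u)"
proof (rule convex_on_linorderI)
  fix t x y :: real assume t: "0 < t" "t < 1" and xy: "x \<in> {0<..}" "y \<in> {0<..}" "x < y"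
  let ?P = "pinv_powr \<phi> u" and ?z = "(1 - t) * x + t * y"
  have z: "0 < ?z" using t xy by (auto intro: add_pos_pos)
  have "\<phi> ((1 - t) * ?P x + t * ?P y) \<le> \<phi> (?P x) powr (1 - t) * \<phi> (?P y) powr t"
    using lcvx pinv_powr(1)[OF gen u] xy t unfolding log_convex_on_def by simp
  also have "\<dots> = u powr ?z"
    using pinv_powr(3)[OF gen u] xy by (simp add: powr_powr powr_add mult.commute)
  finally have "pinv \<phi> (u powr ?z) \<le> ereal ((1 - t) * ?P x + t * ?P y)"
    by (rule pinv_le[rotated]) (use pinv_powr(1)[OF gen u] xy t in simp)
  then show "?P ((1 - t) *\<^sub>R x + t *\<^sub>R y) \<le> (1 - t) * ?P x + t * ?P y"
    using pinv_powr(2)[OF gen u z] by simp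
qed simp

text \<open>Log-concavity through the point 0, where \<phi> = 1, forbids flat pieces below level 1.\<close>
lemma log_concave_generator_less:
  fixes \<phi> :: "real \<Rightarrow> real"
  assumes lccv: "log_concave_on {0..} \<phi>" and \<phi>0: "\<phi> 0 = 1"
    and qp: "0 \<le> q" "q < p" and \<phi>p: "0 < \<phi> p" "\<phi> p < 1"
  shows "\<phi> p < \<phi> q"
proof (cases "q = 0")
  case True
  then show ?thesis using \<phi>0 \<phi>p by simp
next
  case False
  define \<theta> where "\<theta> = q / p"
  have \<theta>: "0 < \<theta>" "\<theta> < 1" using qp False by (auto simp: \<theta>_def field_simps)
  have "\<phi> p = \<phi> p powr 1" using \<phi>p by simp
  also have "\<dots> < \<phi> p powr \<theta>" using powr_less_mono'[OF \<phi>p \<theta>(2)] .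
  also have "\<dots> = \<phi> 0 powr (1 - \<theta>) * \<phi> p powr \<theta>" using \<phi>0 by simp
  also have "\<dots> \<le> \<phi> ((1 - \<theta>) * 0 + \<theta> * p)"
    using lccv \<theta> qp unfolding log_concave_on_def
    by (metis atLeast_iff greaterThanLessThan_iff order_refl order_le_less_trans less_imp_le)
  also have "(1 - \<theta>) * 0 + \<theta> * p = q" using qp by (simp add: \<theta>_def)
  finally show ?thesis .
qed

lemma pinv_powr_concave:
  assumes gen: "archimedean_generator n \<phi>" and lccv: "log_concave_on {0..} \<phi>"
    and u: "0 < u" "u < 1"
  shows "concave_on {0<..} (pinv_powr \<phi> u)"
proof (rule concave_on_linorderI)
  fix t x y :: real assume t: "0 < t" "t < 1" and xy: "x \<in> {0<..}" "y \<in> {0<..}" "x < y"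
  let ?P = "pinv_powr \<phi> u" and ?z = "(1 - t) * x + t * y"
  define p where "p = (1 - t) * ?P x + t * ?P y"
  have z: "0 < ?z" using t xy by (auto intro: add_pos_pos)
  have Pz: "0 \<le> ?P ?z" "\<phi> (?P ?z) = u powr ?z" using pinv_powr[OF gen _ _ z] u by auto
  have uz: "0 < u powr ?z" "u powr ?z < 1" using u z powr_less_mono'[of u 0 ?z] by auto
  have "u powr ?z = \<phi> (?P x) powr (1 - t) * \<phi> (?P y) powr t"
    using pinv_powr(3)[OF gen] u xy by (simp add: powr_powr powr_add mult.commute)
  also have "\<dots> \<le> \<phi> p"
    using lccv pinv_powr(1)[OF gen] u xy t unfolding log_concave_on_def p_def by simp
  finally have \<phi>p: "u powr ?z \<le> \<phi> p" .
  have "p \<le> ?P ?z"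
  proof (rule ccontr)
    assume "\<not> p \<le> ?P ?z"
    then have less: "?P ?z < p" by simp
    then have "\<phi> p \<le> u powr ?z"
      using archimedean_generator_le[OF gen Pz(1)] Pz(2) by fastforce
    then have "\<phi> p < \<phi> (?P ?z)"
      using log_concave_generator_less[OF lccv archimedean_generatorD(3)[OF gen] Pz(1) less]
        \<phi>p uz Pz(2) by simp
    then show False using \<phi>p Pz(2) by simp
  qed
  then show "(1 - t) * ?P x + t * ?P y \<le> ?P ((1 - t) *\<^sub>R x + t *\<^sub>R y)"
    by (simp add: p_def)
qed simp

lemma sum_pinv_powr_le_if_tail_sums_le:
  fixes a b :: "nat \<Rightarrow> real"
  assumes gen: "archimedean_generator n \<phi>" and lcvx: "log_convex_on {0..} \<phi>"
    and u: "0 < u" "u \<le> 1" and a: "\<And>i. i < m \<Longrightarrow> 0 < a i" and b: "\<And>i. i < m \<Longrightarrow> 0 < b i"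
    and tail: "\<forall>j<m. (\<Sum>i=j..<m. ord_stat m b i) \<le> (\<Sum>i=j..<m. ord_stat m a i)"
  shows "(\<Sum>i<m. pinv_powr \<phi> u (b i)) \<le> (\<Sum>i<m. pinv_powr \<phi> u (a i))"
proof -
  have "(\<Sum>i<m. pinv_powr \<phi> u (ord_stat m b i)) \<le> (\<Sum>i<m. pinv_powr \<phi> u (ord_stat m a i))"
    by (rule sum_convex_le_if_tail_sums_le[OF pinv_powr_convex[OF gen lcvx u] pinv_powr_mono[OF gen u]])
      (use a b tail ord_stat_mono in \<open>auto intro: ord_stat_preserves\<close>)
  then show ?thesis by (simp add: sum_ord_stat)
qed

lemma sum_pinv_powr_le_if_prefix_sums_ge:
  fixes a b :: "nat \<Rightarrow> real"
  assumes gen: "archimedean_generator n \<phi>" and lccv: "log_concave_on {0..} \<phi>"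
    and u: "0 < u" "u < 1" and a: "\<And>i. i < m \<Longrightarrow> 0 < a i" and b: "\<And>i. i < m \<Longrightarrow> 0 < b i"
    and prefix: "\<forall>j<m. (\<Sum>i<Suc j. ord_stat m a i) \<le> (\<Sum>i<Suc j. ord_stat m b i)"
  shows "(\<Sum>i<m. pinv_powr \<phi> u (a i)) \<le> (\<Sum>i<m. pinv_powr \<phi> u (b i))"
proof -
  have "(\<Sum>i<m. pinv_powr \<phi> u (ord_stat m a i)) \<le> (\<Sum>i<m. pinv_powr \<phi> u (ord_stat m b i))"
    by (rule sum_concave_le_if_prefix_sums_ge[OF pinv_powr_concave[OF gen lccv u] pinv_powr_mono[OF gen]])
      (use u a b prefix ord_stat_mono in \<open>auto intro: ord_stat_preserves\<close>)
  then show ?thesis by (simp add: sum_ord_stat)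
qed

lemma arch_copula_powr:
  assumes gen: "archimedean_generator n \<phi>" and u: "0 < u" "u \<le> 1" and a: "\<And>i. i < m \<Longrightarrow> 0 < a i"
  shows "arch_copula \<phi> m (\<lambda>i. u powr a i) = \<phi> (\<Sum>i<m. pinv_powr \<phi> u (a i))"
proof -
  have "(\<Sum>i<m. pinv \<phi> (u powr a i)) = (\<Sum>i<m. ereal (pinv_powr \<phi> u (a i)))"
    by (rule sum.cong) (use pinv_powr(2)[OF gen u] a in auto)
  then show ?thesis by (simp add: arch_copula_def gen_ext_def)
qed

text \<open>At v = 0 and v = 1 both copulas equal v, so only 0 < v < 1 needs an argument.\<close>
lemma arch_copula_powr_le:
  assumes gen: "archimedean_generator n \<phi>" and m: "0 < m" and v: "0 \<le> v" "v \<le> 1"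
    and a: "\<And>i. i < m \<Longrightarrow> 0 < a i" and b: "\<And>i. i < m \<Longrightarrow> 0 < b i"
    and sums: "0 < v \<Longrightarrow> v < 1 \<Longrightarrow> (\<Sum>i<m. pinv_powr \<phi> v (b i)) \<le> (\<Sum>i<m. pinv_powr \<phi> v (a i))"
  shows "arch_copula \<phi> m (\<lambda>i. v powr a i) \<le> arch_copula \<phi> m (\<lambda>i. v powr b i)"
proof -
  consider "v = 0" | "v = 1" | "0 < v" "v < 1" using v by linarith
  then show ?thesis
  proof cases
    case 1
    then show ?thesis using arch_copula_eq_zero[OF gen m] by simp
  next
    case 2
    then show ?thesis using pinv_one[OF gen] by (simp add: arch_copula_def)
  next
    case 3
    have "0 \<le> (\<Sum>i<m. pinv_powr \<phi> v (b i))"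
      by (intro sum_nonneg) (use pinv_powr(1)[OF gen] 3 b in auto)
    then have "\<phi> (\<Sum>i<m. pinv_powr \<phi> v (a i)) \<le> \<phi> (\<Sum>i<m. pinv_powr \<phi> v (b i))"
      by (rule archimedean_generator_le[OF gen _ sums[OF 3]])
    then show ?thesis using 3 by (simp add: arch_copula_powr[OF gen _ _ a] arch_copula_powr[OF gen _ _ b])
  qed
qed

lemma arch_copula_powr_le_if_log_convex:
  assumes gen1: "archimedean_generator n1 \<phi>1" and gen2: "archimedean_generator n2 \<phi>2"
    and m: "0 < m" and lcvx: "log_convex_on {0..} \<phi>1 \<or> log_convex_on {0..} \<phi>2"
    and sa: "super_additive (pinv \<phi>2 \<circ> \<phi>1)"
    and \<alpha>: "\<And>i. i < m \<Longrightarrow> 0 < \<alpha> i" and \<alpha>s: "\<And>i. i < m \<Longrightarrow> 0 < \<alpha>s i"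
    and tail: "\<forall>j<m. (\<Sum>i=j..<m. ord_stat m \<alpha>s i) \<le> (\<Sum>i=j..<m. ord_stat m \<alpha> i)"
    and v: "0 \<le> v" "v \<le> 1"
  shows "arch_copula \<phi>1 m (\<lambda>i. v powr \<alpha> i) \<le> arch_copula \<phi>2 m (\<lambda>i. v powr \<alpha>s i)"
proof -
  have switch: "arch_copula \<phi>1 m (\<lambda>i. v powr c i) \<le> arch_copula \<phi>2 m (\<lambda>i. v powr c i)"
    if "\<And>i. i < m \<Longrightarrow> 0 < c i" for c
    by (rule arch_copula_le_if_super_additive[OF gen1 gen2 sa]) (use v that in \<open>auto intro!: powr_le1 simp: less_imp_le\<close>)
  have majorize: "arch_copula \<phi> m (\<lambda>i. v powr \<alpha> i) \<le> arch_copula \<phi> m (\<lambda>i. v powr \<alpha>s i)"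
    if gen: "archimedean_generator k \<phi>" and "log_convex_on {0..} \<phi>" for k \<phi>
  proof (rule arch_copula_powr_le[OF gen m v \<alpha> \<alpha>s])
    show "(\<Sum>i<m. pinv_powr \<phi> v (\<alpha>s i)) \<le> (\<Sum>i<m. pinv_powr \<phi> v (\<alpha> i))" if "0 < v" "v < 1"
      using that by (intro sum_pinv_powr_le_if_tail_sums_le[OF gen \<open>log_convex_on {0..} \<phi>\<close> _ _ \<alpha> \<alpha>s tail]) simp_all
  qed
  from lcvx show ?thesis
  proof
    assume "log_convex_on {0..} \<phi>1"
    then have "arch_copula \<phi>1 m (\<lambda>i. v powr \<alpha> i) \<le> arch_copula \<phi>1 m (\<lambda>i. v powr \<alpha>s i)"
      by (rule majorize[OF gen1])
    also have "\<dots> \<le> arch_copula \<phi>2 m (\<lambda>i. v powr \<alpha>s i)" using switch \<alpha>s .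
    finally show ?thesis .
  next
    assume "log_convex_on {0..} \<phi>2"
    have "arch_copula \<phi>1 m (\<lambda>i. v powr \<alpha> i) \<le> arch_copula \<phi>2 m (\<lambda>i. v powr \<alpha> i)" using switch \<alpha> .
    also have "\<dots> \<le> arch_copula \<phi>2 m (\<lambda>i. v powr \<alpha>s i)"
      by (rule majorize[OF gen2]) fact
    finally show ?thesis .
  qed
qed

lemma arch_copula_powr_le_if_log_concave:
  assumes gen1: "archimedean_generator n1 \<phi>1" and gen2: "archimedean_generator n2 \<phi>2"
    and m: "0 < m" and lccv: "log_concave_on {0..} \<phi>1 \<or> log_concave_on {0..} \<phi>2"
    and sa: "super_additive (pinv \<phi>1 \<circ> \<phi>2)"
    and \<alpha>: "\<And>i. i < m \<Longrightarrow> 0 < \<alpha> i" and \<alpha>s: "\<And>i. i < m \<Longrightarrow> 0 < \<alpha>s i"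
    and prefix: "\<forall>j<m. (\<Sum>i<Suc j. ord_stat m \<alpha> i) \<le> (\<Sum>i<Suc j. ord_stat m \<alpha>s i)"
    and v: "0 \<le> v" "v \<le> 1"
  shows "arch_copula \<phi>2 m (\<lambda>i. v powr \<alpha>s i) \<le> arch_copula \<phi>1 m (\<lambda>i. v powr \<alpha> i)"
proof -
  have switch: "arch_copula \<phi>2 m (\<lambda>i. v powr c i) \<le> arch_copula \<phi>1 m (\<lambda>i. v powr c i)"
    if "\<And>i. i < m \<Longrightarrow> 0 < c i" for c
    by (rule arch_copula_le_if_super_additive[OF gen2 gen1 sa]) (use v that in \<open>auto intro!: powr_le1 simp: less_imp_le\<close>)
  have majorize: "arch_copula \<phi> m (\<lambda>i. v powr \<alpha>s i) \<le> arch_copula \<phi> m (\<lambda>i. v powr \<alpha> i)"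
    if gen: "archimedean_generator k \<phi>" and "log_concave_on {0..} \<phi>" for k \<phi>
  proof (rule arch_copula_powr_le[OF gen m v \<alpha>s \<alpha>])
    show "(\<Sum>i<m. pinv_powr \<phi> v (\<alpha> i)) \<le> (\<Sum>i<m. pinv_powr \<phi> v (\<alpha>s i))" if "0 < v" "v < 1"
      using that by (intro sum_pinv_powr_le_if_prefix_sums_ge[OF gen \<open>log_concave_on {0..} \<phi>\<close> _ _ \<alpha> \<alpha>s prefix]) simp_all
  qed
  from lccv show ?thesis
  proof
    assume "log_concave_on {0..} \<phi>1"
    have "arch_copula \<phi>2 m (\<lambda>i. v powr \<alpha>s i) \<le> arch_copula \<phi>1 m (\<lambda>i. v powr \<alpha>s i)" using switch \<alpha>s .
    also have "\<dots> \<le> arch_copula \<phi>1 m (\<lambda>i. v powr \<alpha> i)"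
      by (rule majorize[OF gen1]) fact
    finally show ?thesis .
  next
    assume "log_concave_on {0..} \<phi>2"
    then have "arch_copula \<phi>2 m (\<lambda>i. v powr \<alpha>s i) \<le> arch_copula \<phi>2 m (\<lambda>i. v powr \<alpha> i)"
      by (rule majorize[OF gen2])
    also have "\<dots> \<le> arch_copula \<phi>1 m (\<lambda>i. v powr \<alpha> i)" using switch \<alpha> .
    finally show ?thesis .
  qed
qed

lemma prob_max_stat_gt:
  assumes M: "prob_space M" and X: "\<forall>i<n. (\<lambda>\<omega>. X \<omega> i) \<in> borel_measurable M" and n: "0 < n"
  shows "measure M {\<omega> \<in> space M. x < max_stat n (X \<omega>)} = 1 - joint_cdf M n X (\<lambda>_. x)"
proof -
  let ?below = "{\<omega> \<in> space M. \<forall>i<n. X \<omega> i \<le> x}"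
  have "{\<omega> \<in> space M. X \<omega> i \<le> x} \<in> sets M" if "i \<in> {..<n}" for i
    using X that unfolding borel_measurable_iff_le by blast
  then have "?below \<in> sets M"
    using sets.sets_Collect_finite_All[of "{..<n}" M "\<lambda>i \<omega>. X \<omega> i \<le> x"] by (simp add: lessThan_iff)
  then have "measure M (space M - ?below) = 1 - measure M ?below"
    by (rule prob_space.prob_compl[OF M])
  moreover have "x < max_stat n (X \<omega>) \<longleftrightarrow> (\<exists>i<n. x < X \<omega> i)" for \<omega>
    unfolding max_stat_def using n by (subst Max_gr_iff) auto
  then have "{\<omega> \<in> space M. x < max_stat n (X \<omega>)} = space M - ?below" by (auto simp: not_le)
  ultimately show ?thesis by (simp add: joint_cdf_def)
qed

lemma st_le_max_stat_if_joint_cdf_le: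
  assumes M: "prob_space M" and X: "\<forall>i<n. (\<lambda>\<omega>. X \<omega> i) \<in> borel_measurable M"
    and N: "prob_space N" and Y: "\<forall>i<n. (\<lambda>\<omega>. Y \<omega> i) \<in> borel_measurable N" and n: "0 < n"
    and cdf: "\<And>x. joint_cdf N n Y (\<lambda>_. x) \<le> joint_cdf M n X (\<lambda>_. x)"
  shows "st_le M (\<lambda>\<omega>. max_stat n (X \<omega>)) N (\<lambda>\<omega>. max_stat n (Y \<omega>))"
  unfolding st_le_def using prob_max_stat_gt[OF M X n] prob_max_stat_gt[OF N Y n] cdf by simp

theorem mainTheorem6:
  fixes n :: nat and G :: "real \<Rightarrow> real" and lam :: real
    and \<alpha> \<alpha>s :: "nat \<Rightarrow> real" and \<phi>1 \<phi>2 :: "real \<Rightarrow> real"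
    and M :: "'a measure" and X :: "'a \<Rightarrow> nat \<Rightarrow> real"
    and Ms :: "'b measure" and Xs :: "'b \<Rightarrow> nat \<Rightarrow> real"
  assumes n: "n \<ge> 2"
    and G: "\<exists>D. real_distribution D \<and> absolutely_continuous lborel D \<and>
              measure D {..<0} = 0 \<and> G = cdf D"
    and lam: "lam > 0"
    and alpha_pos: "\<forall>i<n. \<alpha> i > 0" and alphas_pos: "\<forall>i<n. \<alpha>s i > 0"
    and gen1: "archimedean_generator n \<phi>1" and gen2: "archimedean_generator n \<phi>2"
    and M: "prob_space M" and Xrv: "\<forall>i<n. (\<lambda>\<omega>. X \<omega> i) \<in> borel_measurable M"
    and Xcdf: "\<forall>x. joint_cdf M n X x = arch_copula \<phi>1 n (\<lambda>i. G (lam * x i) powr \<alpha> i)"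
    and Ms: "prob_space Ms" and Xsrv: "\<forall>i<n. (\<lambda>\<omega>. Xs \<omega> i) \<in> borel_measurable Ms"
    and Xscdf: "\<forall>x. joint_cdf Ms n Xs x = arch_copula \<phi>2 n (\<lambda>i. G (lam * x i) powr \<alpha>s i)"
  shows
    "((log_convex_on {0..} \<phi>1 \<or> log_convex_on {0..} \<phi>2) \<and>
      super_additive (pinv \<phi>2 \<circ> \<phi>1) \<and>
      (\<forall>j<n. (\<Sum>i=j..<n. ord_stat n \<alpha>s i) \<le> (\<Sum>i=j..<n. ord_stat n \<alpha> i))
      \<longrightarrow> st_le Ms (\<lambda>\<omega>. max_stat n (Xs \<omega>)) M (\<lambda>\<omega>. max_stat n (X \<omega>)))
   \<and>
    ((log_concave_on {0..} \<phi>1 \<or> log_concave_on {0..} \<phi>2) \<and>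
      super_additive (pinv \<phi>1 \<circ> \<phi>2) \<and>
      (\<forall>j<n. (\<Sum>i<Suc j. ord_stat n \<alpha>s i) \<ge> (\<Sum>i<Suc j. ord_stat n \<alpha> i))
      \<longrightarrow> st_le M (\<lambda>\<omega>. max_stat n (X \<omega>)) Ms (\<lambda>\<omega>. max_stat n (Xs \<omega>)))"
proof -
  obtain D where D: "real_distribution D" "G = cdf D" using G by blast
  have G_unit: "0 \<le> G t" "G t \<le> 1" for t
    using D real_distribution.cdf_bounded_prob real_distribution.finite_borel_measure_M
      finite_borel_measure.cdf_nonneg by metis+
  have n0: "0 < n" using n by simp
  have cdfs: "joint_cdf M n X (\<lambda>_. x) = arch_copula \<phi>1 n (\<lambda>i. G (lam * x) powr \<alpha> i)"
    "joint_cdf Ms n Xs (\<lambda>_. x) = arch_copula \<phi>2 n (\<lambda>i. G (lam * x) powr \<alpha>s i)" for x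
    using Xcdf Xscdf by simp_all
  show ?thesis
  proof (intro conjI impI)
    assume "(log_convex_on {0..} \<phi>1 \<or> log_convex_on {0..} \<phi>2) \<and> super_additive (pinv \<phi>2 \<circ> \<phi>1) \<and>
      (\<forall>j<n. (\<Sum>i=j..<n. ord_stat n \<alpha>s i) \<le> (\<Sum>i=j..<n. ord_stat n \<alpha> i))"
    then show "st_le Ms (\<lambda>\<omega>. max_stat n (Xs \<omega>)) M (\<lambda>\<omega>. max_stat n (X \<omega>))"
      using arch_copula_powr_le_if_log_convex[OF gen1 gen2 n0 _ _ alpha_pos[rule_format]
          alphas_pos[rule_format] _ G_unit]
      by (intro st_le_max_stat_if_joint_cdf_le[OF Ms Xsrv M Xrv n0]) (simp add: cdfs)
  next
    assume "(log_concave_on {0..} \<phi>1 \<or> log_concave_on {0..} \<phi>2) \<and> super_additive (pinv \<phi>1 \<circ> \<phi>2) \<and>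
      (\<forall>j<n. (\<Sum>i<Suc j. ord_stat n \<alpha>s i) \<ge> (\<Sum>i<Suc j. ord_stat n \<alpha> i))"
    then show "st_le M (\<lambda>\<omega>. max_stat n (X \<omega>)) Ms (\<lambda>\<omega>. max_stat n (Xs \<omega>))"
      using arch_copula_powr_le_if_log_concave[OF gen1 gen2 n0 _ _ alpha_pos[rule_format]
          alphas_pos[rule_format] _ G_unit]
      by (intro st_le_max_stat_if_joint_cdf_le[OF M Xrv Ms Xsrv n0]) (simp add: cdfs)
  qed
qed

end
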